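(* With notation as in the context, let $0\ne b\in\mathcal B_0$ be written as $b=\sum_{U\in\mathcal U}\lambda_U\chi_U$, where $\mathcal U$ is a finite family of nonempty pairwise disjoint clopen subsets of $X$ and $\lambda_U\in K\setminus\{0\}$. Then there exists $W\in\mathcal V$ with $h_W\cdot b\ne0$.
   Context: Let $X$ be an infinite, totally disconnected, compact metrizable space, $T$ a homeomorphism of $X$, $\mu$ a full (positive on nonempty open sets), ergodic, $T$-invariant Borel probability measure, $K$ a field with involution, $C_K(X)$ the $*$-algebra of locally constant functions $X\to K$, and $\mathcal A=C_K(X)\rtimes_T\mathbb Z$ the algebraic crossed product (finite sums $\sum f_it^i$, $tf=(f\circ T^{-1})t$, $(ft^i)^*=t^{-i}f^*$). Let $E$ be a nonempty clopen set, $\mathcal P$ a partition of $X\setminus E$ (finite family of nonempty pairwise disjoint clopen sets with union $X\setminus E$), $\mathcal B$ the unital $*$-subalgebra of $\mathcal A$ generated by $\{\chi_Zt:Z\in\mathcal P\}$, and $\mathcal B_0=C_K(X)\cap\mathcal B$. $\mathcal V$ is the set of nonempty sets $W=E\cap T^{-1}(Z_1)\cap\cdots\cap T^{-k+1}(Z_{k-1})\cap T^{-k}(E)$ ($k\ge1$, $Z_i\in\mathcal P$), $|W|=k$, and $h_W=\sum_{l=0}^{|W|-1}\chi_{T^l(W)}$. *)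

theory Defs
  imports "HOL-Probability.Probability"
begin

definition totally_disconnected_space :: "'a::topological_space itself \<Rightarrow> bool" where
  "totally_disconnected_space _ \<longleftrightarrow>
     (\<forall>S::'a set. connected S \<longrightarrow> (\<forall>x\<in>S. \<forall>y\<in>S. x = y))"

definition clopen_set :: "'a::topological_space set \<Rightarrow> bool" where
  "clopen_set S \<longleftrightarrow> open S \<and> closed S"

definition locally_const :: "('a::topological_space \<Rightarrow> 'k) \<Rightarrow> bool" where
  "locally_const f \<longleftrightarrow> (\<forall>x. \<exists>U. open U \<and> x \<in> U \<and> (\<forall>y\<in>U. f y = f x))"

definition full_measure :: "'a::topological_space measure \<Rightarrow> bool" where
  "full_measure \<mu> \<longleftrightarrow> (\<forall>U. open U \<and> U \<noteq> {} \<longrightarrow> emeasure \<mu> U > 0)"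

definition invariant_measure :: "('a::topological_space \<Rightarrow> 'a) \<Rightarrow> 'a measure \<Rightarrow> bool" where
  "invariant_measure T \<mu> \<longleftrightarrow> (\<forall>A\<in>sets borel. emeasure \<mu> (T -` A) = emeasure \<mu> A)"

definition ergodic_measure :: "('a::topological_space \<Rightarrow> 'a) \<Rightarrow> 'a measure \<Rightarrow> bool" where
  "ergodic_measure T \<mu> \<longleftrightarrow>
     (\<forall>A\<in>sets borel. T -` A = A \<longrightarrow> emeasure \<mu> A = 0 \<or> emeasure \<mu> A = 1)"

definition field_involution :: "('k::field \<Rightarrow> 'k) \<Rightarrow> bool" where
  "field_involution c \<longleftrightarrow> (\<forall>x y. c (x + y) = c x + c y) \<and> (\<forall>x y. c (x * y) = c x * c y)
      \<and> (\<forall>x. c (c x) = x)"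

text \<open>An element \<open>\<Sum> f_i t^i\<close> is represented by its coefficient function
  \<open>a :: int \<Rightarrow> 'a \<Rightarrow> 'k\<close>, with \<open>a i = f_i\<close> (finitely many nonzero, each locally constant).\<close>

definition tpow :: "('a \<Rightarrow> 'a) \<Rightarrow> int \<Rightarrow> 'a \<Rightarrow> 'a" where
  "tpow T i = (if 0 \<le> i then T ^^ nat i else (inv T) ^^ nat (- i))"

definition cp_elems :: "(int \<Rightarrow> 'a::topological_space \<Rightarrow> 'k::field) set" where
  "cp_elems = {a. finite {i. a i \<noteq> (\<lambda>_. 0)} \<and> (\<forall>i. locally_const (a i))}"

definition cp_zero :: "int \<Rightarrow> 'a \<Rightarrow> 'k::field" where
  "cp_zero = (\<lambda>n x. 0)"

definition cp_one :: "int \<Rightarrow> 'a \<Rightarrow> 'k::field" where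
  "cp_one = (\<lambda>n x. if n = 0 then 1 else 0)"

definition cp_add :: "(int \<Rightarrow> 'a \<Rightarrow> 'k::field) \<Rightarrow> (int \<Rightarrow> 'a \<Rightarrow> 'k) \<Rightarrow> int \<Rightarrow> 'a \<Rightarrow> 'k" where
  "cp_add a b = (\<lambda>n x. a n x + b n x)"

definition cp_smul :: "'k::field \<Rightarrow> (int \<Rightarrow> 'a \<Rightarrow> 'k) \<Rightarrow> int \<Rightarrow> 'a \<Rightarrow> 'k" where
  "cp_smul l a = (\<lambda>n x. l * a n x)"

text \<open>\<open>(f t^i)(g t^j) = f (g \<circ> T^{-i}) t^{i+j}\<close>.\<close>
definition cp_mult :: "('a \<Rightarrow> 'a) \<Rightarrow> (int \<Rightarrow> 'a \<Rightarrow> 'k::field) \<Rightarrow> (int \<Rightarrow> 'a \<Rightarrow> 'k) \<Rightarrow> int \<Rightarrow> 'a \<Rightarrow> 'k" where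
  "cp_mult T a b = (\<lambda>n x. \<Sum>i\<in>{i. a i \<noteq> (\<lambda>_. 0)}. a i x * b (n - i) (tpow T (- i) x))"

text \<open>\<open>(f t^i)^* = t^{-i} f^* = (f^* \<circ> T^i) t^{-i}\<close>.\<close>
definition cp_star :: "('a \<Rightarrow> 'a) \<Rightarrow> ('k::field \<Rightarrow> 'k) \<Rightarrow> (int \<Rightarrow> 'a \<Rightarrow> 'k) \<Rightarrow> int \<Rightarrow> 'a \<Rightarrow> 'k" where
  "cp_star T c a = (\<lambda>n x. c (a (- n) (tpow T (- n) x)))"

definition cp_mono :: "('a \<Rightarrow> 'k::field) \<Rightarrow> int \<Rightarrow> int \<Rightarrow> 'a \<Rightarrow> 'k" where
  "cp_mono f i = (\<lambda>n x. if n = i then f x else 0)"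

definition chi :: "'a set \<Rightarrow> 'a \<Rightarrow> 'k::field" where
  "chi S = (\<lambda>x. if x \<in> S then 1 else 0)"

inductive_set gen_star_alg ::
  "('a \<Rightarrow> 'a) \<Rightarrow> ('k::field \<Rightarrow> 'k) \<Rightarrow> (int \<Rightarrow> 'a \<Rightarrow> 'k) set \<Rightarrow> (int \<Rightarrow> 'a \<Rightarrow> 'k) set"
  for T c G where
  gen: "g \<in> G \<Longrightarrow> g \<in> gen_star_alg T c G"
| one: "cp_one \<in> gen_star_alg T c G"
| add: "a \<in> gen_star_alg T c G \<Longrightarrow> b \<in> gen_star_alg T c G \<Longrightarrow> cp_add a b \<in> gen_star_alg T c G"
| smul: "a \<in> gen_star_alg T c G \<Longrightarrow> cp_smul l a \<in> gen_star_alg T c G"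
| mult: "a \<in> gen_star_alg T c G \<Longrightarrow> b \<in> gen_star_alg T c G \<Longrightarrow> cp_mult T a b \<in> gen_star_alg T c G"
| star: "a \<in> gen_star_alg T c G \<Longrightarrow> cp_star T c a \<in> gen_star_alg T c G"

definition is_partition_of :: "'a::topological_space set set \<Rightarrow> 'a set \<Rightarrow> bool" where
  "is_partition_of P Y \<longleftrightarrow> finite P \<and> (\<forall>Z\<in>P. Z \<noteq> {} \<and> clopen_set Z)
     \<and> (\<forall>Z1\<in>P. \<forall>Z2\<in>P. Z1 \<noteq> Z2 \<longrightarrow> Z1 \<inter> Z2 = {}) \<and> \<Union>P = Y"

definition algB :: "('a \<Rightarrow> 'a) \<Rightarrow> ('k::field \<Rightarrow> 'k) \<Rightarrow> 'a set set \<Rightarrow> (int \<Rightarrow> 'a \<Rightarrow> 'k) set" where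
  "algB T c P = gen_star_alg T c {cp_mono (chi Z) 1 | Z. Z \<in> P}"

text \<open>\<open>B_0 = C_K(X) \<inter> B\<close>: elements of B supported in degree 0 (identified with their
  degree-0 coefficient in C_K(X)).\<close>
definition algB0 :: "('a \<Rightarrow> 'a) \<Rightarrow> ('k::field \<Rightarrow> 'k) \<Rightarrow> 'a set set \<Rightarrow> (int \<Rightarrow> 'a \<Rightarrow> 'k) set" where
  "algB0 T c P = {b \<in> algB T c P. \<forall>n. n \<noteq> 0 \<longrightarrow> b n = (\<lambda>_. 0)}"

definition Wset :: "('a \<Rightarrow> 'a) \<Rightarrow> 'a set \<Rightarrow> nat \<Rightarrow> (nat \<Rightarrow> 'a set) \<Rightarrow> 'a set" where
  "Wset T E k Z = E \<inter> (\<Inter>i\<in>{1..<k}. (T ^^ i) -` Z i) \<inter> (T ^^ k) -` E"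

text \<open>\<open>W \<in> V\<close> with \<open>|W| = k\<close>.\<close>
definition inV :: "('a \<Rightarrow> 'a) \<Rightarrow> 'a set \<Rightarrow> 'a set set \<Rightarrow> 'a set \<Rightarrow> nat \<Rightarrow> bool" where
  "inV T E P W k \<longleftrightarrow> 1 \<le> k \<and> W \<noteq> {} \<and>
     (\<exists>Z. (\<forall>i\<in>{1..<k}. Z i \<in> P) \<and> W = Wset T E k Z)"

definition hW :: "('a \<Rightarrow> 'a) \<Rightarrow> 'a set \<Rightarrow> nat \<Rightarrow> int \<Rightarrow> 'a \<Rightarrow> 'k::field" where
  "hW T W k = cp_mono (\<lambda>x. \<Sum>l<k. chi ((T ^^ l) ` W) x) 0"

end

theory Submission
  imports Defs
begin

text \<open>By ergodicity, almost every point visits the clopen set \<open>E\<close> infinitely often both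
  in the future and in the past, and since \<open>\<mu>\<close> is full, some point \<open>x\<close> in the support of
  \<open>b\<close> has this property. The stretch of the orbit of \<open>x\<close> between its last visit \<open>w\<close> to \<open>E\<close>
  (at time \<open>-m \<le> 0\<close>) and its next visit (at time \<open>k - m \<ge> 1\<close>) is a first-return
  excursion, so \<open>w \<in> W\<close> for some \<open>W \<in> \<V>\<close> with \<open>|W| = k\<close>. The sets \<open>T\<^sup>l(W)\<close>, \<open>l < k\<close>, are
  pairwise disjoint, hence \<open>h\<^sub>W(x) = 1\<close> and \<open>(h\<^sub>W b)(x) = b(x) \<noteq> 0\<close>.\<close>

lemma emeasure_funpow_vimage:
  assumes inv: "invariant_measure f \<mu>" and f: "f \<in> borel_measurable borel"
    and A: "A \<in> sets borel"
  shows "emeasure \<mu> ((f ^^ n) -` A) = emeasure \<mu> A"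
  using A
proof (induction n arbitrary: A)
  case (Suc n)
  have "(f ^^ Suc n) -` A = (f ^^ n) -` (f -` A)"
    by auto
  moreover have "f -` A \<in> sets borel"
    using measurable_sets_borel[OF f Suc.prems] .
  ultimately show ?case
    using Suc.IH inv Suc.prems unfolding invariant_measure_def by metis
qed simp

lemma invariant_measure_inv:
  assumes "bij f" and inv: "invariant_measure f \<mu>" and f': "inv f \<in> borel_measurable borel"
  shows "invariant_measure (inv f) \<mu>"
  unfolding invariant_measure_def
proof
  fix A :: "'a set"
  assume A: "A \<in> sets borel"
  have "f -` (inv f -` A) = A"
    using \<open>bij f\<close> by (auto simp: bij_is_inj)
  moreover have "inv f -` A \<in> sets borel"
    using measurable_sets_borel[OF f' A] .
  ultimately show "emeasure \<mu> (inv f -` A) = emeasure \<mu> A"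
    using inv unfolding invariant_measure_def by metis
qed

lemma ergodic_measure_inv:
  assumes "bij f" and "ergodic_measure f \<mu>"
  shows "ergodic_measure (inv f) \<mu>"
  unfolding ergodic_measure_def
proof (intro ballI impI)
  fix A :: "'a set"
  assume "A \<in> sets borel" and A_inv: "inv f -` A = A"
  have "f -` A = f -` (inv f -` A)"
    using A_inv by simp
  also have "\<dots> = A"
    using \<open>bij f\<close> by (auto simp: bij_is_inj)
  finally show "emeasure \<mu> A = 0 \<or> emeasure \<mu> A = 1"
    using assms(2) \<open>A \<in> sets borel\<close> unfolding ergodic_measure_def by blast
qed

lemma homeomorphism_UNIV_measurable_bij:
  fixes T :: "'a::topological_space \<Rightarrow> 'a"
  assumes "homeomorphism UNIV UNIV T g"
  shows "bij T" and "T \<in> borel_measurable borel" and "inv T \<in> borel_measurable borel"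
proof -
  have "inv T = g"
    using assms unfolding homeomorphism_def by (auto intro: inv_equality)
  then show "bij T" "T \<in> borel_measurable borel" "inv T \<in> borel_measurable borel"
    using assms unfolding homeomorphism_def
    by (auto intro!: bij_betw_byWitness[of UNIV g] borel_measurable_continuous_onI)
qed

definition escape_set :: "('a \<Rightarrow> 'a) \<Rightarrow> 'a set \<Rightarrow> 'a set" where
  "escape_set f E = {x. \<forall>\<^sub>F n in sequentially. (f ^^ n) x \<notin> E}"

lemma vimage_escape_set: "f -` escape_set f E = escape_set f E"
proof -
  have "(\<forall>\<^sub>F n in sequentially. (f ^^ n) (f x) \<notin> E) \<longleftrightarrow>
        (\<forall>\<^sub>F n in sequentially. (f ^^ n) x \<notin> E)" for x
    using eventually_sequentially_Suc[of "\<lambda>n. (f ^^ n) x \<notin> E"]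
    by (simp only: funpow_Suc_right comp_apply)
  then show ?thesis
    unfolding escape_set_def by auto
qed

lemma escape_set_eq_UN:
  "escape_set f E = (\<Union>N. (f ^^ N) -` {x. \<forall>n. (f ^^ n) x \<notin> E})"
proof -
  have "(\<exists>N. \<forall>n\<ge>N. (f ^^ n) x \<notin> E) \<longleftrightarrow> (\<exists>N. \<forall>n. (f ^^ (n + N)) x \<notin> E)" for x
    by (metis le_add2 le_add_diff_inverse2)
  then show ?thesis
    unfolding escape_set_def eventually_sequentially by (auto simp: funpow_add)
qed

lemma never_visiting_borel:
  fixes f :: "'a::topological_space \<Rightarrow> 'a"
  assumes f: "f \<in> borel_measurable borel" and E: "E \<in> sets borel"
  shows "{x. \<forall>n. (f ^^ n) x \<notin> E} \<in> sets borel"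
proof -
  have "{x. \<forall>n. (f ^^ n) x \<notin> E} = (\<Inter>n. (f ^^ n) -` (- E))"
    by auto
  then show ?thesis
    using measurable_sets_borel[OF measurable_compose_n[OF f]] E by auto
qed

lemma escape_set_borel:
  fixes f :: "'a::topological_space \<Rightarrow> 'a"
  assumes f: "f \<in> borel_measurable borel" and E: "E \<in> sets borel"
  shows "escape_set f E \<in> sets borel"
  unfolding escape_set_eq_UN
  using measurable_sets_borel[OF measurable_compose_n[OF f] never_visiting_borel[OF f E]]
  by auto

text \<open>The escape set is the increasing union of the preimages \<open>f\<^sup>-\<^sup>N(A)\<close> of the set \<open>A\<close>
  of points never visiting \<open>E\<close>; these all have measure \<open>\<mu> A \<le> 1 - \<mu> E < 1\<close>, and
  ergodicity rules out the value 1 for the invariant escape set.\<close>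

lemma emeasure_escape_set_eq_0:
  fixes f :: "'a::topological_space \<Rightarrow> 'a"
  assumes prob: "prob_space \<mu>" and sets_\<mu>: "sets \<mu> = sets borel"
    and f: "f \<in> borel_measurable borel"
    and inv: "invariant_measure f \<mu>" and erg: "ergodic_measure f \<mu>"
    and E: "E \<in> sets borel" and E_pos: "emeasure \<mu> E > 0"
  shows "emeasure \<mu> (escape_set f E) = 0"
proof -
  define A where "A = {x. \<forall>n. (f ^^ n) x \<notin> E}"
  have A_borel: "A \<in> sets borel"
    unfolding A_def using never_visiting_borel[OF f E] .
  have "incseq (\<lambda>N. (f ^^ N) -` A)"
  proof (rule incseq_SucI)
    show "(f ^^ N) -` A \<subseteq> (f ^^ Suc N) -` A" for N
    proof
      fix x
      assume "x \<in> (f ^^ N) -` A"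
      then have "\<forall>n. (f ^^ Suc n) ((f ^^ N) x) \<notin> E"
        unfolding A_def by blast
      then show "x \<in> (f ^^ Suc N) -` A"
        unfolding A_def by (simp add: funpow_swap1)
    qed
  qed
  then have "emeasure \<mu> (escape_set f E) = (SUP N. emeasure \<mu> ((f ^^ N) -` A))"
    unfolding escape_set_eq_UN A_def[symmetric]
    using measurable_sets_borel[OF measurable_compose_n[OF f] A_borel] sets_\<mu>
    by (intro SUP_emeasure_incseq[symmetric]) auto
  also have "\<dots> = emeasure \<mu> A"
    using emeasure_funpow_vimage[OF inv f A_borel] by simp
  finally have escape_eq: "emeasure \<mu> (escape_set f E) = emeasure \<mu> A" .
  have "A \<inter> E = {}"
    unfolding A_def by (auto dest: spec[of _ 0])
  then have "emeasure \<mu> A + emeasure \<mu> E = emeasure \<mu> (A \<union> E)"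
    using plus_emeasure[of A \<mu> E] A_borel E sets_\<mu> by auto
  also have "\<dots> \<le> 1"
    using prob_space.emeasure_le_1[OF prob] .
  finally have "emeasure \<mu> A \<noteq> 1"
    using E_pos by (auto simp: ennreal_add_left_cancel_le[of 1 _ 0, simplified])
  then have "emeasure \<mu> (escape_set f E) \<noteq> 1"
    using escape_eq by simp
  then show ?thesis
    using erg escape_set_borel[OF f E] vimage_escape_set[of f E]
    unfolding ergodic_measure_def by blast
qed

lemma frequently_visits_if_not_escaping:
  assumes "x \<notin> escape_set f E"
  shows "\<exists>n\<ge>N. (f ^^ n) x \<in> E"
  using assms by (simp add: escape_set_def not_eventually frequently_sequentially)

lemma exists_recurrent_point:
  fixes T :: "'a::topological_space \<Rightarrow> 'a"
  assumes prob: "prob_space \<mu>" and sets_\<mu>: "sets \<mu> = sets borel" and full: "full_measure \<mu>"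
    and "bij T" and T: "T \<in> borel_measurable borel" and T': "inv T \<in> borel_measurable borel"
    and inv: "invariant_measure T \<mu>" and erg: "ergodic_measure T \<mu>"
    and "open E" "E \<noteq> {}" and "open U" "U \<noteq> {}"
  obtains x where "x \<in> U" "x \<notin> escape_set T E" "x \<notin> escape_set (inv T) E"
proof -
  have E: "E \<in> sets borel" and E_pos: "emeasure \<mu> E > 0"
    using \<open>open E\<close> \<open>E \<noteq> {}\<close> full unfolding full_measure_def by auto
  have null_fwd: "emeasure \<mu> (escape_set T E) = 0"
    using emeasure_escape_set_eq_0[OF prob sets_\<mu> T inv erg E E_pos] .
  have null_bwd: "emeasure \<mu> (escape_set (inv T) E) = 0"
    using emeasure_escape_set_eq_0[OF prob sets_\<mu> T' invariant_measure_inv[OF \<open>bij T\<close> inv T']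
        ergodic_measure_inv[OF \<open>bij T\<close> erg] E E_pos] .
  have "\<not> U \<subseteq> escape_set T E \<union> escape_set (inv T) E"
  proof
    assume U_sub: "U \<subseteq> escape_set T E \<union> escape_set (inv T) E"
    have "emeasure \<mu> U \<le> emeasure \<mu> (escape_set T E \<union> escape_set (inv T) E)"
      using emeasure_mono[OF U_sub] escape_set_borel[OF T E] escape_set_borel[OF T' E] sets_\<mu>
      by simp
    also have "\<dots> \<le> emeasure \<mu> (escape_set T E) + emeasure \<mu> (escape_set (inv T) E)"
      using escape_set_borel[OF T E] escape_set_borel[OF T' E] sets_\<mu>
      by (intro emeasure_subadditive) simp_all
    finally have "emeasure \<mu> U = 0"
      using null_fwd null_bwd by simp
    then show False
      using full \<open>open U\<close> \<open>U \<noteq> {}\<close> unfolding full_measure_def by auto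
  qed
  then show ?thesis
    using that by blast
qed

lemma excursion_through:
  assumes "bij f" and fwd: "x \<notin> escape_set f E" and bwd: "x \<notin> escape_set (inv f) E"
  obtains w m k where "w \<in> E" "(f ^^ k) w \<in> E" "m < k" "(f ^^ m) w = x"
    "\<And>i. 0 < i \<Longrightarrow> i < k \<Longrightarrow> (f ^^ i) w \<notin> E"
proof -
  define m where "m = (LEAST m. (inv f ^^ m) x \<in> E)"
  define n where "n = (LEAST n. 1 \<le> n \<and> (f ^^ n) x \<in> E)"
  have m_E: "(inv f ^^ m) x \<in> E" and m_least: "\<And>j. j < m \<Longrightarrow> (inv f ^^ j) x \<notin> E"
    unfolding m_def using frequently_visits_if_not_escaping[OF bwd]
    by (metis LeastI) (use not_less_Least in blast)
  have n_E: "1 \<le> n \<and> (f ^^ n) x \<in> E" and n_least: "\<And>j. j < n \<Longrightarrow> 1 \<le> j \<Longrightarrow> (f ^^ j) x \<notin> E"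
    unfolding n_def using frequently_visits_if_not_escaping[OF fwd]
    by (rule LeastI_ex) (use not_less_Least in blast)
  define w where "w = (inv f ^^ m) x"
  have cancel: "(f ^^ i) ((inv f ^^ i) y) = y" for i y
    using fn_o_inv_fn_is_id[OF \<open>bij f\<close>] by (metis comp_apply)
  have before: "(f ^^ i) w = (inv f ^^ (m - i)) x" if "i \<le> m" for i
    using cancel[of i "(inv f ^^ (m - i)) x"] that
    unfolding w_def by (metis comp_apply funpow_add le_add_diff_inverse)
  then have w_x: "(f ^^ m) w = x"
    by simp
  have after: "(f ^^ i) w = (f ^^ (i - m)) x" if "m \<le> i" for i
    using that w_x by (metis comp_apply funpow_add le_add_diff_inverse2)
  show ?thesis
  proof
    show "w \<in> E" "(f ^^ (m + n)) w \<in> E" "m < m + n" "(f ^^ m) w = x"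
      using m_E n_E w_x after[of "m + n"] by (auto simp: w_def)
    show "(f ^^ i) w \<notin> E" if "0 < i" "i < m + n" for i
    proof (cases "i \<le> m")
      case True
      then show ?thesis
        using before m_least that by simp
    next
      case False
      then show ?thesis
        using after n_least[of "i - m"] that by simp
    qed
  qed
qed

lemma inV_excursion:
  assumes "inV T E P W k" and "\<Union>P = - E" and "v \<in> W"
  shows "v \<in> E" and "\<And>i. 0 < i \<Longrightarrow> i < k \<Longrightarrow> (T ^^ i) v \<notin> E"
proof -
  obtain Z where Z: "\<forall>i\<in>{1..<k}. Z i \<in> P" and W: "W = Wset T E k Z"
    using assms(1) unfolding inV_def by blast
  show "v \<in> E"
    using \<open>v \<in> W\<close> W unfolding Wset_def by blast
  show "(T ^^ i) v \<notin> E" if "0 < i" "i < k" for i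
  proof -
    have "(T ^^ i) v \<in> Z i" and "Z i \<in> P"
      using that \<open>v \<in> W\<close> W Z unfolding Wset_def by auto
    then show ?thesis
      using \<open>\<Union>P = - E\<close> by blast
  qed
qed

lemma inV_Wset_through:
  assumes "\<Union>P = - E" and "w \<in> E" and "(T ^^ k) w \<in> E" and "0 < k"
    and avoid: "\<And>i. 0 < i \<Longrightarrow> i < k \<Longrightarrow> (T ^^ i) w \<notin> E"
  obtains Z where "inV T E P (Wset T E k Z) k" and "w \<in> Wset T E k Z"
proof -
  define Z where "Z i = (SOME Y. Y \<in> P \<and> (T ^^ i) w \<in> Y)" for i
  have Z: "Z i \<in> P \<and> (T ^^ i) w \<in> Z i" if "0 < i" "i < k" for i
  proof -
    have "\<exists>Y. Y \<in> P \<and> (T ^^ i) w \<in> Y"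
      using avoid[OF that] \<open>\<Union>P = - E\<close> by blast
    then show ?thesis
      unfolding Z_def by (rule someI_ex)
  qed
  have "w \<in> Wset T E k Z"
    unfolding Wset_def using \<open>w \<in> E\<close> \<open>(T ^^ k) w \<in> E\<close> Z by auto
  moreover have "inV T E P (Wset T E k Z) k"
    unfolding inV_def using \<open>0 < k\<close> Z calculation by (intro conjI exI[of _ Z]) auto
  ultimately show ?thesis
    using that by blast
qed

lemma excursion_orbits_disjoint:
  assumes "inj f"
    and v: "v \<in> E" "\<And>i. 0 < i \<Longrightarrow> i < k \<Longrightarrow> (f ^^ i) v \<notin> E"
    and w: "w \<in> E" "\<And>i. 0 < i \<Longrightarrow> i < k \<Longrightarrow> (f ^^ i) w \<notin> E"
    and "l < k" "m < k" and eq: "(f ^^ l) v = (f ^^ m) w"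
  shows "l = m"
proof -
  have "\<not> l < m" if eq: "(f ^^ l) a = (f ^^ m) b" and "a \<in> E" "m < k"
    and b: "\<And>i. 0 < i \<Longrightarrow> i < k \<Longrightarrow> (f ^^ i) b \<notin> E" for a b l m
  proof
    assume "l < m"
    then have "(f ^^ l) a = (f ^^ l) ((f ^^ (m - l)) b)"
      using eq by (metis comp_apply funpow_add le_add_diff_inverse less_imp_le)
    then have "a = (f ^^ (m - l)) b"
      using inj_fn[OF \<open>inj f\<close>] by (meson injD)
    then show False
      using \<open>a \<in> E\<close> b[of "m - l"] \<open>l < m\<close> \<open>m < k\<close> by simp
  qed
  from this[OF eq v(1) \<open>m < k\<close> w(2)] this[OF eq[symmetric] w(1) \<open>l < k\<close> v(2)]
  show ?thesis
    by simp
qed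

lemma hW_excursion_point:
  assumes "inj T" and W: "inV T E P W k" and P: "\<Union>P = - E" and "w \<in> W" and "m < k"
  shows "hW T W k 0 ((T ^^ m) w) = (1::'k::field)"
proof -
  have "(T ^^ m) w \<in> (T ^^ l) ` W \<longleftrightarrow> l = m" if "l < k" for l
  proof
    assume "(T ^^ m) w \<in> (T ^^ l) ` W"
    then obtain v where "v \<in> W" and "(T ^^ l) v = (T ^^ m) w"
      by auto
    then show "l = m"
      using excursion_orbits_disjoint[OF \<open>inj T\<close> inV_excursion[OF W P \<open>v \<in> W\<close>]
          inV_excursion[OF W P \<open>w \<in> W\<close>] \<open>l < k\<close> \<open>m < k\<close>]
      by blast
  qed (use \<open>w \<in> W\<close> in blast)
  then have "(\<Sum>l<k. chi ((T ^^ l) ` W) ((T ^^ m) w)) = (\<Sum>l<k. if l = m then 1 else 0 :: 'k)"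
    unfolding chi_def by (intro sum.cong) auto
  then show ?thesis
    using \<open>m < k\<close> by (simp add: hW_def cp_mono_def)
qed

lemma cp_mult_cp_mono_0: "cp_mult T (cp_mono f 0) b n x = f x * b n x"
proof (cases "f = (\<lambda>_. 0)")
  case True
  then show ?thesis
    by (simp add: cp_mult_def cp_mono_def)
next
  case False
  then have "{i. cp_mono f 0 i \<noteq> (\<lambda>_. 0)} = {0}"
    by (auto simp: cp_mono_def fun_eq_iff)
  then show ?thesis
    by (simp add: cp_mult_def cp_mono_def tpow_def)
qed

lemma sum_chi_disjoint:
  assumes "finite \<U>" and disj: "\<forall>U1\<in>\<U>. \<forall>U2\<in>\<U>. U1 \<noteq> U2 \<longrightarrow> U1 \<inter> U2 = {}"
    and "U \<in> \<U>" and "x \<in> U"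
  shows "(\<Sum>U'\<in>\<U>. lam U' * chi U' x) = (lam U :: 'k::field)"
proof -
  have "(\<Sum>U'\<in>\<U>. lam U' * chi U' x) = (\<Sum>U'\<in>\<U>. if U' = U then lam U else 0)"
    using disj \<open>U \<in> \<U>\<close> \<open>x \<in> U\<close> unfolding chi_def by (intro sum.cong) auto
  then show ?thesis
    using assms by simp
qed

theorem lemma3p11:
  fixes T :: "'a::metric_space \<Rightarrow> 'a"
    and \<mu> :: "'a measure"
    and c :: "'k::field \<Rightarrow> 'k"
    and E :: "'a set"
    and P :: "'a set set"
    and b :: "int \<Rightarrow> 'a \<Rightarrow> 'k"
    and \<U> :: "'a set set"
    and lam :: "'a set \<Rightarrow> 'k"
  assumes X_infinite: "infinite (UNIV :: 'a set)"
    and X_compact: "compact (UNIV :: 'a set)"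
    and X_tdisc: "totally_disconnected_space TYPE('a)"
    and T_homeo: "\<exists>g. homeomorphism UNIV UNIV T g"
    and \<mu>_borel: "sets \<mu> = sets borel"
    and \<mu>_prob: "prob_space \<mu>"
    and \<mu>_full: "full_measure \<mu>"
    and \<mu>_inv: "invariant_measure T \<mu>"
    and \<mu>_erg: "ergodic_measure T \<mu>"
    and c_inv: "field_involution c"
    and E_ne: "E \<noteq> {}"
    and E_clopen: "clopen_set E"
    and P_part: "is_partition_of P (- E)"
    and b_B0: "b \<in> algB0 T c P"
    and b_nz: "b \<noteq> cp_zero"
    and U_fin: "finite \<U>"
    and U_sets: "\<forall>U\<in>\<U>. U \<noteq> {} \<and> clopen_set U"
    and U_disj: "\<forall>U1\<in>\<U>. \<forall>U2\<in>\<U>. U1 \<noteq> U2 \<longrightarrow> U1 \<inter> U2 = {}"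
    and lam_nz: "\<forall>U\<in>\<U>. lam U \<noteq> 0"
    and b_repr: "b 0 = (\<lambda>x. \<Sum>U\<in>\<U>. lam U * chi U x)"
  shows "\<exists>W k. inV T E P W k \<and> cp_mult T (hW T W k) b \<noteq> cp_zero"
proof -
  obtain g where "homeomorphism UNIV UNIV T g"
    using T_homeo by blast
  note T = homeomorphism_UNIV_measurable_bij[OF this]
  have P: "\<Union>P = - E"
    using P_part unfolding is_partition_of_def by blast
  obtain U where U: "U \<in> \<U>"
  proof (cases "\<U> = {}")
    case True
    then have "b n = (\<lambda>_. 0)" for n
      using b_repr b_B0 unfolding algB0_def by (cases "n = 0") auto
    then have "b = cp_zero"
      unfolding cp_zero_def by blast
    with b_nz show ?thesis by simp
  qed blast
  obtain x where "x \<in> U" "x \<notin> escape_set T E" "x \<notin> escape_set (inv T) E"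
    using exists_recurrent_point[OF \<mu>_prob \<mu>_borel \<mu>_full T \<mu>_inv \<mu>_erg, of E U]
      E_clopen E_ne U U_sets unfolding clopen_set_def by blast
  then obtain w m k where w: "w \<in> E" "(T ^^ k) w \<in> E" "m < k" "(T ^^ m) w = x"
    and avoid: "\<And>i. 0 < i \<Longrightarrow> i < k \<Longrightarrow> (T ^^ i) w \<notin> E"
    using excursion_through[OF T(1)] by metis
  then obtain Z where W: "inV T E P (Wset T E k Z) k" and "w \<in> Wset T E k Z"
    using inV_Wset_through[OF P] by (metis gr_zeroI less_nat_zero_code)
  have "hW T (Wset T E k Z) k 0 x = (1::'k)"
    using hW_excursion_point[OF bij_is_inj[OF T(1)] W P \<open>w \<in> Wset T E k Z\<close> \<open>m < k\<close>] w(4)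
    by simp
  moreover have "b 0 x = lam U"
    using sum_chi_disjoint[OF U_fin U_disj U \<open>x \<in> U\<close>, of lam] b_repr by simp
  ultimately have "cp_mult T (hW T (Wset T E k Z) k) b 0 x = lam U"
    unfolding hW_def cp_mult_cp_mono_0 by (simp add: cp_mono_def)
  then have "cp_mult T (hW T (Wset T E k Z) k) b \<noteq> cp_zero"
    using lam_nz U unfolding cp_zero_def by metis
  with W show ?thesis
    by blast
qed

end
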